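(* There is a $T$-family on $\mathbb N$. More precisely, for every $0<\varepsilon<1$ there are a partition $\mathbb N=\bigcup_n I_n$ into nonempty finite pieces $I_n$ and a pre-compact family $\mathcal F$ on $\mathbb N$ such that: (a) $\mathcal F$ is not $4$-large in any infinite $M\subseteq\mathbb N$; (b) $\mathcal G_{1-\varepsilon}(\mathcal F)=\mathcal G_+(\mathcal F)=\mathfrak S$, where $\mathfrak S=\{s\subseteq\mathbb N:\#s=\min s\}$ is the Schreier barrier; (c) for every $s\in\mathcal F$ one has $s\cap I_n=I_n$, where $n$ is the least $m$ with $s\cap I_m\neq\emptyset$.
   Context: A family on $J$ is a collection of finite subsets of $J$; it is pre-compact if every set in its closure in $2^J$ (product topology) is finite. A family $\mathcal H$ is $n$-large in $J$ if for every infinite $K\subseteq J$ there is $s\in\mathcal H$ with $\#(s\cap K)\ge n$, and large in $J$ if it is $n$-large for every $n$. For finite $s\subseteq\mathbb N$ and $0<\lambda<1$: $s[\lambda]=\{n:\#(s\cap I_n)\ge\lambda\#I_n\}$, $s[+]=\{n:s\cap I_n\ne\emptyset\}$, $\mathcal G_\lambda(\mathcal F)=\{s[\lambda]:s\in\mathcal F\}$, $\mathcal G_+(\mathcal F)=\{s[+]:s\in\mathcal F\}$. A pre-compact family $\mathcal F$ on a set $I$ partitioned into finite pieces $(I_n)_n$ is a $T$-family if it is not large in any infinite $J\subseteq I$ and there is $0<\lambda\le1$ such that $\mathcal G_\lambda(\mathcal F)$ is large in $\mathbb N$. *)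

theory Defs
  imports Complex_Main
begin

definition family_on :: "'a set set \<Rightarrow> 'a set \<Rightarrow> bool" where
  "family_on F J \<longleftrightarrow> (\<forall>s\<in>F. finite s \<and> s \<subseteq> J)"

text \<open>Closure of F in 2^J with the product topology: A is in the closure iff
  every basic neighbourhood (determined by a finite set G of coordinates) meets F.\<close>
definition in_closure :: "'a set set \<Rightarrow> 'a set \<Rightarrow> 'a set \<Rightarrow> bool" where
  "in_closure F J A \<longleftrightarrow> A \<subseteq> J \<and>
     (\<forall>G. finite G \<and> G \<subseteq> J \<longrightarrow> (\<exists>s\<in>F. s \<inter> G = A \<inter> G))"

definition pre_compact :: "'a set set \<Rightarrow> 'a set \<Rightarrow> bool" where
  "pre_compact F J \<longleftrightarrow> (\<forall>A. in_closure F J A \<longrightarrow> finite A)"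

definition n_large :: "nat \<Rightarrow> 'a set set \<Rightarrow> 'a set \<Rightarrow> bool" where
  "n_large n H J \<longleftrightarrow> (\<forall>K. K \<subseteq> J \<and> infinite K \<longrightarrow> (\<exists>s\<in>H. card (s \<inter> K) \<ge> n))"

definition large :: "'a set set \<Rightarrow> 'a set \<Rightarrow> bool" where
  "large H J \<longleftrightarrow> (\<forall>n. n_large n H J)"

definition finite_partition :: "(nat \<Rightarrow> nat set) \<Rightarrow> bool" where
  "finite_partition I \<longleftrightarrow> (\<forall>n. I n \<noteq> {} \<and> finite (I n)) \<and>
     (\<forall>m n. m \<noteq> n \<longrightarrow> I m \<inter> I n = {}) \<and> (\<Union>n. I n) = UNIV"

definition sub_lambda :: "(nat \<Rightarrow> nat set) \<Rightarrow> real \<Rightarrow> nat set \<Rightarrow> nat set" where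
  "sub_lambda I lam s = {n. real (card (s \<inter> I n)) \<ge> lam * real (card (I n))}"

definition sub_plus :: "(nat \<Rightarrow> nat set) \<Rightarrow> nat set \<Rightarrow> nat set" where
  "sub_plus I s = {n. s \<inter> I n \<noteq> {}}"

definition G_lambda :: "(nat \<Rightarrow> nat set) \<Rightarrow> real \<Rightarrow> nat set set \<Rightarrow> nat set set" where
  "G_lambda I lam F = sub_lambda I lam ` F"

definition G_plus :: "(nat \<Rightarrow> nat set) \<Rightarrow> nat set set \<Rightarrow> nat set set" where
  "G_plus I F = sub_plus I ` F"

definition schreier :: "nat set set" where
  "schreier = {s. finite s \<and> s \<noteq> {} \<and> card s = Min s}"

end

theory Submission
  imports Defs "HOL-Library.Ramsey" "HOL-Library.Countable_Set" "HOL-Library.FuncSet"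
begin

text \<open>Let \<open>N \<ge> 1/\<epsilon>\<close> and let the piece \<open>I\<^sub>r\<close> be (an enumeration of) the labellings of level
  \<open>r\<close>: maps \<open>x\<close> giving every pair \<open>(a, b)\<close> with \<open>a, b < r\<close> a value below \<open>(a + 1)\<^sup>3 N\<close>.
  A Schreier set \<open>t\<close> is spread to all of \<open>I\<^bsub>min t\<^esub>\<close> together with, for every other
  \<open>r \<in> t\<close>, the labellings in \<open>I\<^sub>r\<close> with no repetition \<open>x (a, b) = x (a, c)\<close> for
  \<open>a < b < c\<close> in \<open>t\<close>. A union bound over the at most \<open>(#t)\<^sup>3 \<le> (min t)\<^sup>3\<close> triples
  removes at most a fraction \<open>1/N \<le> \<epsilon>\<close> of each piece, so the traces \<open>s[1-\<epsilon>]\<close> and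
  \<open>s[+]\<close> are both \<open>t\<close>; pre-compactness follows because these traces are Schreier sets.
  Given an infinite \<open>M\<close>, choose one point of \<open>M\<close> in each of infinitely many pieces.
  Ramsey's theorem for 4-sets and the pigeonhole principle give an infinite set \<open>H\<close> of
  levels such that the labelling chosen at \<open>d \<in> H\<close> repeats on all \<open>a < b < c < d\<close> in \<open>H\<close>;
  hence no member of the family contains four of the points chosen at levels in \<open>H\<close>.\<close>

section \<open>Partitions of \<open>\<nat>\<close> from enumerations of a \<open>\<Sigma>\<close>-type\<close>

definition sigma_enum :: "(nat \<Rightarrow> 'a set) \<Rightarrow> nat \<Rightarrow> nat \<times> 'a" where
  "sigma_enum X = from_nat_into (SIGMA r:UNIV. X r)"

definition sigma_piece :: "(nat \<Rightarrow> 'a set) \<Rightarrow> nat \<Rightarrow> nat set" where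
  "sigma_piece X r = {i. fst (sigma_enum X i) = r}"

context
  fixes X :: "nat \<Rightarrow> 'a set"
  assumes finite_X: "\<And>r. finite (X r)" and X_nonempty: "\<And>r. X r \<noteq> {}"
begin

lemma bij_betw_sigma_enum: "bij_betw (sigma_enum X) UNIV (SIGMA r:UNIV. X r)"
proof -
  have "countable (SIGMA r:UNIV. X r)"
    using finite_X by (intro countable_SIGMA) (auto intro: countable_finite)
  moreover have "fst ` (SIGMA r:UNIV. X r) = UNIV"
    using X_nonempty by force
  then have "infinite (SIGMA r:UNIV. X r)"
    by (metis finite_imageI infinite_UNIV_nat)
  ultimately show ?thesis
    unfolding sigma_enum_def by (rule bij_betw_from_nat_into)
qed

lemma bij_betw_sigma_piece: "bij_betw (\<lambda>i. snd (sigma_enum X i)) (sigma_piece X r) (X r)"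
proof -
  have enum: "inj (sigma_enum X)" "range (sigma_enum X) = (SIGMA r:UNIV. X r)"
    using bij_betw_sigma_enum by (auto simp: bij_betw_def)
  have "inj_on (\<lambda>i. snd (sigma_enum X i)) (sigma_piece X r)"
    using enum(1) by (auto simp: inj_on_def sigma_piece_def prod_eq_iff)
  moreover have "(\<lambda>i. snd (sigma_enum X i)) ` sigma_piece X r = X r"
  proof
    show "(\<lambda>i. snd (sigma_enum X i)) ` sigma_piece X r \<subseteq> X r"
      using enum(2) by (auto simp: sigma_piece_def)
    show "X r \<subseteq> (\<lambda>i. snd (sigma_enum X i)) ` sigma_piece X r"
    proof
      fix x assume "x \<in> X r"
      then obtain i where "sigma_enum X i = (r, x)"
        using enum(2) by (metis SigmaI UNIV_I imageE)
      then have "i \<in> sigma_piece X r" "x = snd (sigma_enum X i)"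
        by (simp_all add: sigma_piece_def)
      then show "x \<in> (\<lambda>i. snd (sigma_enum X i)) ` sigma_piece X r" by blast
    qed
  qed
  ultimately show ?thesis by (simp add: bij_betw_def)
qed

lemma finite_sigma_piece: "finite (sigma_piece X r)"
  using bij_betw_finite bij_betw_sigma_piece finite_X by blast

lemma card_sigma_piece_filter:
  "card {i \<in> sigma_piece X r. P (snd (sigma_enum X i))} = card {x \<in> X r. P x}"
proof -
  have "bij_betw (\<lambda>i. snd (sigma_enum X i)) {i \<in> sigma_piece X r. P (snd (sigma_enum X i))} {x \<in> X r. P x}"
    using bij_betw_sigma_piece[of r] by (auto simp: bij_betw_def inj_on_def)
  then show ?thesis by (rule bij_betw_same_card)
qed

lemma card_sigma_piece: "card (sigma_piece X r) = card (X r)"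
  using card_sigma_piece_filter[of r "\<lambda>_. True"] by simp

lemma finite_partition_sigma_piece: "finite_partition (sigma_piece X)"
proof -
  have "sigma_piece X r \<noteq> {}" for r
    using card_sigma_piece[of r] finite_X X_nonempty by force
  then show ?thesis
    unfolding finite_partition_def using finite_sigma_piece by (auto simp: sigma_piece_def)
qed

end

section \<open>Pre-compactness from the Schreier barrier\<close>

lemma schreier_card_le: "t \<in> schreier \<Longrightarrow> a \<in> t \<Longrightarrow> card t \<le> a"
  unfolding schreier_def by auto

lemma infinite_pieces_meeting:
  assumes "finite_partition I" "infinite A"
  shows "infinite {n. A \<inter> I n \<noteq> {}}"
proof
  assume "finite {n. A \<inter> I n \<noteq> {}}"
  moreover have "A \<subseteq> (\<Union>n\<in>{n. A \<inter> I n \<noteq> {}}. I n)"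
    using assms(1) unfolding finite_partition_def by blast
  ultimately show False
    using assms unfolding finite_partition_def by (meson finite_UN_I finite_subset)
qed

text \<open>A member of \<open>F\<close> agreeing with an infinite \<open>A\<close> on a point of \<open>I\<^sub>p\<close> and on points of
  \<open>p + 1\<close> further pieces met by \<open>A\<close> would have a Schreier trace with minimum at most \<open>p\<close>
  but more than \<open>p\<close> elements.\<close>
lemma pre_compact_if_G_plus_subset_schreier:
  assumes I: "finite_partition I" and F: "G_plus I F \<subseteq> schreier"
  shows "pre_compact F UNIV"
  unfolding pre_compact_def
proof (intro allI impI)
  fix A assume A: "in_closure F UNIV A"
  show "finite A"
  proof (rule ccontr)
    assume "infinite A"
    then obtain a where "a \<in> A" by (metis ex_in_conv infinite_imp_nonempty)
    obtain p where "a \<in> I p" using I unfolding finite_partition_def by blast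
    define Q where "Q = {n. A \<inter> I n \<noteq> {}}"
    have "infinite Q" unfolding Q_def using infinite_pieces_meeting[OF I \<open>infinite A\<close>] .
    then obtain R where R: "R \<subseteq> Q" "finite R" "card R = Suc p"
      using infinite_arbitrarily_large by blast
    have "\<forall>n\<in>Q. \<exists>i. i \<in> A \<inter> I n" unfolding Q_def by blast
    then obtain z where z: "\<And>n. n \<in> Q \<Longrightarrow> z n \<in> A \<inter> I n" by metis
    define G where "G = insert a (z ` R)"
    have "finite G" unfolding G_def using R(2) by simp
    then obtain s where "s \<in> F" "s \<inter> G = A \<inter> G"
      using A unfolding in_closure_def by blast
    moreover have "G \<subseteq> A" using \<open>a \<in> A\<close> z R(1) unfolding G_def by auto
    ultimately have "G \<subseteq> s" by auto
    then have pR: "insert p R \<subseteq> sub_plus I s"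
      using \<open>a \<in> I p\<close> z R(1) unfolding G_def sub_plus_def by auto
    have t: "sub_plus I s \<in> schreier" using F \<open>s \<in> F\<close> unfolding G_plus_def by blast
    then have "finite (sub_plus I s)" unfolding schreier_def by simp
    then have "card R \<le> card (sub_plus I s)" using pR card_mono by blast
    also have "\<dots> \<le> p" using schreier_card_le[OF t] pR by blast
    finally show False using R(3) by simp
  qed
qed

section \<open>Labellings and their repetitions\<close>

lemma card_PiE_coincide_mult_le:
  assumes S: "finite S" "\<And>i. i \<in> S \<Longrightarrow> finite (B i)" and "q \<in> S" "p \<noteq> q"
  shows "card {x \<in> PiE S B. x p = x q} * card (B q) \<le> card (PiE S B)"
proof -
  let ?E = "{x \<in> PiE S B. x p = x q}"
  let ?g = "\<lambda>(x, c). x(q := c)"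
  have "inj_on ?g (?E \<times> B q)"
  proof (rule inj_onI)
    fix u v assume u: "u \<in> ?E \<times> B q" and v: "v \<in> ?E \<times> B q" and eq: "?g u = ?g v"
    obtain x c y d where uv: "u = (x, c)" "v = (y, d)" by fastforce
    have xy: "x p = x q" "y p = y q" using u v uv by auto
    have eq': "x(q := c) = y(q := d)" using eq uv by simp
    have "c = d" using fun_cong[OF eq', of q] by simp
    moreover have "x = y"
    proof
      fix i show "x i = y i"
      proof (cases "i = q")
        case True
        then show ?thesis using fun_cong[OF eq', of p] xy \<open>p \<noteq> q\<close> by simp
      next
        case False
        then show ?thesis using fun_cong[OF eq', of i] by simp
      qed
    qed
    ultimately show "u = v" using uv by simp
  qed
  moreover have "?g ` (?E \<times> B q) \<subseteq> PiE S B"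
    using PiE_fun_upd[of _ B q _ S] \<open>q \<in> S\<close> by (auto simp: insert_absorb)
  ultimately have "card (?E \<times> B q) \<le> card (PiE S B)"
    by (rule card_inj_on_le) (rule finite_PiE[OF S])
  then show ?thesis by (simp add: card_cartesian_product)
qed

definition labellings :: "nat \<Rightarrow> nat \<Rightarrow> (nat \<times> nat \<Rightarrow> nat) set" where
  "labellings N r = PiE ({..<r} \<times> {..<r}) (\<lambda>(a, b). {..<Suc a ^ 3 * N})"

definition repeats_on :: "nat set \<Rightarrow> nat \<Rightarrow> (nat \<times> nat \<Rightarrow> nat) \<Rightarrow> bool" where
  "repeats_on t r x \<longleftrightarrow> (\<exists>a\<in>t. \<exists>b\<in>t. \<exists>c\<in>t. a < b \<and> b < c \<and> c < r \<and> x (a, b) = x (a, c))"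

lemma finite_labellings: "finite (labellings N r)"
  unfolding labellings_def by (intro finite_PiE) auto

lemma labellings_nonempty: "0 < N \<Longrightarrow> labellings N r \<noteq> {}"
  unfolding labellings_def PiE_eq_empty_iff by (auto simp: lessThan_empty_iff)

lemma labelling_less: "x \<in> labellings N r \<Longrightarrow> a < r \<Longrightarrow> b < r \<Longrightarrow> x (a, b) < Suc a ^ 3 * N"
  unfolding labellings_def by (auto simp: PiE_iff)

lemma card_coincide_labellings_le:
  assumes "a < c" "c < r" "b \<noteq> c"
  shows "card {x \<in> labellings N r. x (a, b) = x (a, c)} * (Suc a ^ 3 * N) \<le> card (labellings N r)"
proof -
  let ?B = "\<lambda>(a, b). {..<Suc a ^ 3 * N}"
  have "card {x \<in> PiE ({..<r} \<times> {..<r}) ?B. x (a, b) = x (a, c)} * card (?B (a, c))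
      \<le> card (PiE ({..<r} \<times> {..<r}) ?B)"
    by (rule card_PiE_coincide_mult_le) (use assms in auto)
  then show ?thesis unfolding labellings_def by simp
qed

text \<open>Union bound over the at most \<open>(#t)\<^sup>3\<close> triples \<open>(a, b, c)\<close>: each excludes at most a
  fraction \<open>1 / ((a + 1)\<^sup>3 N) \<le> 1 / ((#t + 1)\<^sup>3 N)\<close> of the labellings.\<close>
lemma card_repeating_mult_le:
  assumes t: "finite t" "\<And>a. a \<in> t \<Longrightarrow> card t \<le> a"
  shows "card {x \<in> labellings N r. repeats_on t r x} * N \<le> card (labellings N r)"
proof -
  define k where "k = card t"
  define T where "T = {(a, b, c). a \<in> t \<and> b \<in> t \<and> c \<in> t \<and> a < b \<and> b < c \<and> c < r}"
  define E where "E = (\<lambda>(a, b, c). {x \<in> labellings N r. x (a, b) = x (a, c)})"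
  have "T \<subseteq> t \<times> t \<times> t" unfolding T_def by auto
  then have fT: "finite T" and cT: "card T \<le> k ^ 3"
    using t(1) card_mono[of "t \<times> t \<times> t" T] finite_subset[of T "t \<times> t \<times> t"]
    by (auto simp: k_def card_cartesian_product power3_eq_cube)
  have E: "card (E p) * (Suc k ^ 3 * N) \<le> card (labellings N r)" if "p \<in> T" for p
  proof -
    obtain a b c where p: "p = (a, b, c)" "a \<in> t" "a < b" "b < c" "c < r"
      using \<open>p \<in> T\<close> unfolding T_def by auto
    have "Suc k ^ 3 * N \<le> Suc a ^ 3 * N"
      using t(2)[OF \<open>a \<in> t\<close>] by (simp add: k_def power_mono)
    then have "card (E p) * (Suc k ^ 3 * N) \<le> card (E p) * (Suc a ^ 3 * N)" by simp
    also have "\<dots> \<le> card (labellings N r)"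
      using card_coincide_labellings_le[of a c r b N] p by (simp add: E_def)
    finally show ?thesis .
  qed
  have "{x \<in> labellings N r. repeats_on t r x} = (\<Union>p\<in>T. E p)"
    unfolding repeats_on_def T_def E_def by auto
  then have "card {x \<in> labellings N r. repeats_on t r x} * (Suc k ^ 3 * N)
      \<le> (\<Sum>p\<in>T. card (E p)) * (Suc k ^ 3 * N)"
    using card_UN_le[OF fT, of E] by simp
  also have "\<dots> = (\<Sum>p\<in>T. card (E p) * (Suc k ^ 3 * N))"
    by (simp add: sum_distrib_right)
  also have "\<dots> \<le> card T * card (labellings N r)"
    using sum_bounded_above[OF E] by simp
  also have "\<dots> \<le> Suc k ^ 3 * card (labellings N r)"
    using cT power_mono[of k "Suc k" 3] by (intro mult_right_mono) linarith+
  finally show ?thesis by (simp add: ac_simps)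
qed

lemma card_non_repeating_ge:
  fixes \<epsilon> :: real
  assumes t: "finite t" "\<And>a. a \<in> t \<Longrightarrow> card t \<le> a" and N: "1 \<le> \<epsilon> * real N"
  shows "(1 - \<epsilon>) * card (labellings N r) \<le> card {x \<in> labellings N r. \<not> repeats_on t r x}"
proof -
  let ?L = "labellings N r" and ?R = "{x \<in> labellings N r. repeats_on t r x}"
  have "0 < \<epsilon> * N" using N by linarith
  then have "0 < \<epsilon>" by (auto simp: zero_less_mult_iff)
  have "card {x \<in> ?L. \<not> repeats_on t r x} = card (?L - ?R)"
    by (rule arg_cong[where f = card]) blast
  also have "\<dots> = card ?L - card ?R" using finite_labellings by (simp add: card_Diff_subset)
  finally have eq: "real (card {x \<in> ?L. \<not> repeats_on t r x}) = card ?L - real (card ?R)"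
    using card_mono[OF finite_labellings, of ?R N r] by (simp add: of_nat_diff)
  have "card ?R * N \<le> card ?L" using t by (rule card_repeating_mult_le)
  then have RL: "real (card ?R) * N \<le> card ?L" by (metis of_nat_le_iff of_nat_mult)
  have "real (card ?R) \<le> real (card ?R) * (\<epsilon> * N)"
    using N by (simp add: mult_le_cancel_left1)
  also have "\<dots> = \<epsilon> * (real (card ?R) * N)" by simp
  also have "\<dots> \<le> \<epsilon> * card ?L" using RL \<open>0 < \<epsilon>\<close> by simp
  finally show ?thesis using eq by (simp add: algebra_simps)
qed

section \<open>Spreading Schreier sets over the pieces\<close>

abbreviation pieces :: "nat \<Rightarrow> nat \<Rightarrow> nat set" where
  "pieces N \<equiv> sigma_piece (labellings N)"

abbreviation level :: "nat \<Rightarrow> nat \<Rightarrow> nat" where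
  "level N i \<equiv> fst (sigma_enum (labellings N) i)"

abbreviation label :: "nat \<Rightarrow> nat \<Rightarrow> nat \<times> nat \<Rightarrow> nat" where
  "label N i \<equiv> snd (sigma_enum (labellings N) i)"

definition spread :: "nat \<Rightarrow> nat set \<Rightarrow> nat set" where
  "spread N t = {i. level N i \<in> t \<and> (level N i = Min t \<or> \<not> repeats_on t (level N i) (label N i))}"

lemma finite_partition_pieces: "0 < N \<Longrightarrow> finite_partition (pieces N)"
  by (rule finite_partition_sigma_piece) (simp_all add: finite_labellings labellings_nonempty)

lemma card_pieces: "0 < N \<Longrightarrow> card (pieces N r) = card (labellings N r)"
  by (rule card_sigma_piece) (simp_all add: finite_labellings labellings_nonempty)

lemma card_pieces_pos: "0 < N \<Longrightarrow> 0 < card (pieces N r)"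
  by (simp add: card_pieces card_gt_0_iff finite_labellings labellings_nonempty)

lemma label_in_labellings: "0 < N \<Longrightarrow> label N i \<in> labellings N (level N i)"
  using bij_betw_sigma_enum[of "labellings N"] finite_labellings labellings_nonempty
  by (metis SigmaE UNIV_I bij_betwE fst_conv snd_conv)

lemma spread_inter_pieces:
  "spread N t \<inter> pieces N r =
    (if r \<notin> t then {} else if r = Min t then pieces N r
     else {i \<in> pieces N r. \<not> repeats_on t r (label N i)})"
  unfolding spread_def sigma_piece_def by auto

lemma finite_spread: "finite t \<Longrightarrow> 0 < N \<Longrightarrow> finite (spread N t)"
proof -
  assume "finite t" "0 < N"
  have "spread N t \<subseteq> (\<Union>r\<in>t. pieces N r)" by (auto simp: spread_def sigma_piece_def)
  then show ?thesis
    using \<open>finite t\<close> finite_partition_pieces[OF \<open>0 < N\<close>]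
    unfolding finite_partition_def by (meson finite_UN_I finite_subset)
qed

lemma card_spread_inter_pieces_ge:
  fixes \<epsilon> :: real
  assumes t: "t \<in> schreier" "r \<in> t" and N: "1 \<le> \<epsilon> * real N"
  shows "(1 - \<epsilon>) * card (pieces N r) \<le> card (spread N t \<inter> pieces N r)"
proof (cases "r = Min t")
  case True
  have "0 < \<epsilon> * N" using N by linarith
  then have "0 \<le> \<epsilon>" by (auto simp: zero_less_mult_iff)
  then show ?thesis using True t by (simp add: spread_inter_pieces algebra_simps)
next
  case False
  have "0 < N" using N by (cases "N = 0") auto
  have "card (spread N t \<inter> pieces N r) = card {x \<in> labellings N r. \<not> repeats_on t r x}"
    using t False card_sigma_piece_filter[of "labellings N"] finite_labellings labellings_nonempty \<open>0 < N\<close>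
    by (simp add: spread_inter_pieces)
  moreover have "(1 - \<epsilon>) * card (labellings N r) \<le> card {x \<in> labellings N r. \<not> repeats_on t r x}"
    using t(1) schreier_card_le[OF t(1)] N
    by (intro card_non_repeating_ge) (auto simp: schreier_def)
  ultimately show ?thesis using card_pieces[OF \<open>0 < N\<close>] by simp
qed

lemma sub_lambda_spread:
  fixes \<epsilon> :: real
  assumes "t \<in> schreier" "1 \<le> \<epsilon> * real N" "\<epsilon> < 1"
  shows "sub_lambda (pieces N) (1 - \<epsilon>) (spread N t) = t"
proof -
  have "0 < N" using assms(2) by (cases "N = 0") auto
  have "n \<notin> sub_lambda (pieces N) (1 - \<epsilon>) (spread N t)" if "n \<notin> t" for n
    using that card_pieces_pos[OF \<open>0 < N\<close>, of n] assms(3)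
    by (simp add: sub_lambda_def spread_inter_pieces mult_le_0_iff)
  then show ?thesis
    using card_spread_inter_pieces_ge[OF assms(1) _ assms(2)] by (auto simp: sub_lambda_def)
qed

lemma sub_plus_spread:
  fixes \<epsilon> :: real
  assumes "t \<in> schreier" "1 \<le> \<epsilon> * real N" "\<epsilon> < 1"
  shows "sub_plus (pieces N) (spread N t) = t"
proof -
  have "0 < N" using assms(2) by (cases "N = 0") auto
  have "spread N t \<inter> pieces N n \<noteq> {}" if "n \<in> t" for n
  proof -
    have "0 < (1 - \<epsilon>) * card (pieces N n)"
      using card_pieces_pos[OF \<open>0 < N\<close>] assms(3) by simp
    also have "\<dots> \<le> card (spread N t \<inter> pieces N n)"
      using card_spread_inter_pieces_ge[OF assms(1) that assms(2)] .
    finally show ?thesis by auto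
  qed
  then show ?thesis by (auto simp: sub_plus_def spread_inter_pieces split: if_splits)
qed

lemma Least_spread_meets:
  assumes "t \<in> schreier" "0 < N"
  shows "(LEAST m. spread N t \<inter> pieces N m \<noteq> {}) = Min t"
proof (rule Least_equality)
  have "Min t \<in> t" using assms(1) unfolding schreier_def by simp
  then show "spread N t \<inter> pieces N (Min t) \<noteq> {}"
    using card_pieces_pos[OF assms(2), of "Min t"] by (auto simp: spread_inter_pieces)
next
  fix m assume "spread N t \<inter> pieces N m \<noteq> {}"
  then have "m \<in> t" by (auto simp: spread_inter_pieces split: if_splits)
  then show "Min t \<le> m" using assms(1) unfolding schreier_def by simp
qed

lemma spread_inter_first_piece:
  assumes "t \<in> schreier" "0 < N"
  defines "n \<equiv> LEAST m. spread N t \<inter> pieces N m \<noteq> {}"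
  shows "spread N t \<inter> pieces N n = pieces N n"
proof -
  have "Min t \<in> t" using assms(1) by (simp add: schreier_def)
  then show ?thesis
    using Least_spread_meets[OF assms(1,2)] by (simp add: n_def spread_inter_pieces)
qed

text \<open>Pigeonhole on the fewer than \<open>(a + 1)\<^sup>3 N\<close> values of \<open>b \<mapsto> x d (a, b)\<close>.\<close>
lemma labellings_repeat:
  assumes H: "infinite H" and x: "\<And>d. d \<in> H \<Longrightarrow> x d \<in> labellings N d"
  obtains a b c d where "a \<in> H" "b \<in> H" "c \<in> H" "d \<in> H" "a < b" "b < c" "c < d"
    "x d (a, b) = x d (a, c)"
proof -
  obtain a where "a \<in> H" using H by (metis ex_in_conv infinite_imp_nonempty)
  have "infinite (H - {..a})" using H by simp
  then obtain B where B: "B \<subseteq> H - {..a}" "finite B" "card B = Suc (Suc a ^ 3 * N)"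
    using infinite_arbitrarily_large by blast
  obtain d where d: "d \<in> H" "Max B < d" using H by (meson infinite_nat_iff_unbounded)
  have Bd: "a < b" "b < d" "b \<in> H" if "b \<in> B" for b
    using that B(1) Max_ge[OF B(2) that] d(2) by auto
  have "(\<lambda>b. x d (a, b)) ` B \<subseteq> {..<Suc a ^ 3 * N}"
    using labelling_less[OF x[OF d(1)]] Bd by (meson image_subsetI lessThan_iff less_trans)
  then have "\<not> inj_on (\<lambda>b. x d (a, b)) B"
    using card_inj_on_le[of _ B "{..<Suc a ^ 3 * N}"] B(3) by fastforce
  then obtain b c where "b \<in> B" "c \<in> B" "b < c" "x d (a, b) = x d (a, c)"
    unfolding inj_on_def by (metis linorder_neq_iff)
  then show ?thesis using that \<open>a \<in> H\<close> d(1) Bd by blast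
qed

lemma sorted_list_of_set_4:
  "a < b \<Longrightarrow> b < c \<Longrightarrow> c < (d::nat) \<Longrightarrow> sorted_list_of_set {a, b, c, d} = [a, b, c, d]"
  using sorted_list_of_set.idem_if_sorted_distinct[of "[a, b, c, d]"] by simp

text \<open>Colour a 4-set \<open>{a < b < c < d}\<close> by whether \<open>x d (a, b) = x d (a, c)\<close>;
  by the pigeonhole lemma, a homogeneous infinite set can only have the repeating colour.\<close>
lemma Ramsey_repeating_labellings:
  assumes P: "infinite P" and x: "\<And>d. d \<in> P \<Longrightarrow> x d \<in> labellings N d"
  obtains H where "H \<subseteq> P" "infinite H"
    "\<And>a b c d. a \<in> H \<Longrightarrow> b \<in> H \<Longrightarrow> c \<in> H \<Longrightarrow> d \<in> H \<Longrightarrow> a < b \<Longrightarrow> b < c \<Longrightarrow> c < d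
      \<Longrightarrow> x d (a, b) = x d (a, c)"
proof -
  define col :: "nat set \<Rightarrow> nat" where
    "col Y = (let l = sorted_list_of_set Y in
      if x (l ! 3) (l ! 0, l ! 1) = x (l ! 3) (l ! 0, l ! 2) then 0 else 1)" for Y
  have col: "col {a, b, c, d} = (if x d (a, b) = x d (a, c) then 0 else 1)"
    if "a < b" "b < c" "c < d" for a b c d
    unfolding col_def Let_def sorted_list_of_set_4[OF that] by simp
  have "\<forall>Y. Y \<subseteq> P \<and> finite Y \<and> card Y = 4 \<longrightarrow> col Y < 2"
    unfolding col_def Let_def by auto
  from Ramsey[OF P this] obtain H k where H: "H \<subseteq> P" "infinite H" "k < 2"
    and hom: "\<forall>Y. Y \<subseteq> H \<and> finite Y \<and> card Y = 4 \<longrightarrow> col Y = k"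
    by blast
  have hom4: "col {a, b, c, d} = k"
    if "a \<in> H" "b \<in> H" "c \<in> H" "d \<in> H" "a < b" "b < c" "c < d" for a b c d
  proof -
    have "{a, b, c, d} \<subseteq> H" "finite {a, b, c, d}" "card {a, b, c, d} = 4" using that by auto
    then show ?thesis using hom by simp
  qed
  have "\<And>d. d \<in> H \<Longrightarrow> x d \<in> labellings N d" using x H(1) by blast
  then obtain a b c d where abcd: "a \<in> H" "b \<in> H" "c \<in> H" "d \<in> H" "a < b" "b < c" "c < d"
    "x d (a, b) = x d (a, c)"
    by (rule labellings_repeat[OF H(2)])
  have "k = 0" using hom4[OF abcd(1-7)] col[OF abcd(5-7)] abcd(8) by simp
  show ?thesis
  proof (rule that[OF H(1,2)])
    fix a b c d assume "a \<in> H" "b \<in> H" "c \<in> H" "d \<in> H" and ord: "a < b" "b < c" "c < d"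
    then have "col {a, b, c, d} = 0" using hom4 \<open>k = 0\<close> by blast
    then show "x d (a, b) = x d (a, c)" using col[OF ord] by (simp split: if_splits)
  qed
qed

lemma card_spread_inter_repeating_lt_4:
  assumes t: "t \<in> schreier" and level_y: "\<And>r. r \<in> H \<Longrightarrow> level N (y r) = r"
    and rep: "\<And>a b c d. a \<in> H \<Longrightarrow> b \<in> H \<Longrightarrow> c \<in> H \<Longrightarrow> d \<in> H \<Longrightarrow> a < b \<Longrightarrow> b < c \<Longrightarrow> c < d
      \<Longrightarrow> label N (y d) (a, b) = label N (y d) (a, c)"
  shows "card (spread N t \<inter> y ` H) < 4"
proof (rule ccontr)
  assume "\<not> card (spread N t \<inter> y ` H) < 4"
  define R where "R = {r \<in> H. y r \<in> spread N t}"
  have "R \<subseteq> t" using level_y by (auto simp: R_def spread_def)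
  have "finite t" using t by (simp add: schreier_def)
  then have "finite R" using \<open>R \<subseteq> t\<close> by (rule rev_finite_subset)
  have "spread N t \<inter> y ` H = y ` R" by (auto simp: R_def)
  then have "4 \<le> card R"
    using \<open>\<not> card (spread N t \<inter> y ` H) < 4\<close> card_image_le[OF \<open>finite R\<close>, of y] by simp
  then obtain Y where "Y \<subseteq> R" "card Y = 4" "finite Y" by (rule obtain_subset_with_card_n)
  then have "Y \<in> [R]\<^bsup>4\<^esup>" by (simp add: nsets_def)
  then obtain a b c d where abcd: "a \<in> R" "b \<in> R" "c \<in> R" "d \<in> R" "a < b" "b < c" "c < d"
    unfolding ordered_nsets_4_eq by blast
  have "label N (y d) (a, b) = label N (y d) (a, c)"
    using rep[of a b c d] abcd by (simp add: R_def)
  then have "repeats_on t d (label N (y d))"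
    using abcd \<open>R \<subseteq> t\<close> unfolding repeats_on_def by blast
  moreover have "Min t \<le> a" using t abcd(1) \<open>R \<subseteq> t\<close> by (auto simp: schreier_def)
  then have "d \<noteq> Min t" using abcd(5-7) by linarith
  moreover have "y d \<in> spread N t" "d \<in> H" using abcd(4) by (auto simp: R_def)
  ultimately show False using level_y by (simp add: spread_def)
qed

lemma spread_not_4_large:
  assumes "0 < N" and M: "infinite M"
  shows "\<not> n_large 4 (spread N ` schreier) M"
proof -
  define P where "P = {r. M \<inter> pieces N r \<noteq> {}}"
  have "infinite P"
    unfolding P_def using infinite_pieces_meeting[OF finite_partition_pieces[OF \<open>0 < N\<close>] M] .
  have "\<forall>r\<in>P. \<exists>i. i \<in> M \<inter> pieces N r" unfolding P_def by blast
  then obtain y where y: "\<And>r. r \<in> P \<Longrightarrow> y r \<in> M \<inter> pieces N r" by metis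
  then have level_y: "level N (y r) = r" if "r \<in> P" for r
    using that by (auto simp: sigma_piece_def)
  obtain H where H: "H \<subseteq> P" "infinite H"
    and rep: "\<And>a b c d. a \<in> H \<Longrightarrow> b \<in> H \<Longrightarrow> c \<in> H \<Longrightarrow> d \<in> H \<Longrightarrow> a < b \<Longrightarrow> b < c \<Longrightarrow> c < d
      \<Longrightarrow> label N (y d) (a, b) = label N (y d) (a, c)"
    using Ramsey_repeating_labellings[OF \<open>infinite P\<close>, of "\<lambda>r. label N (y r)" N]
      label_in_labellings[OF \<open>0 < N\<close>] level_y by metis
  have "inj_on y H" using level_y H(1) by (metis inj_onI subsetD)
  then have "infinite (y ` H)" using H(2) finite_imageD by blast
  moreover have "y ` H \<subseteq> M" using y H(1) by auto
  moreover have "card (s \<inter> y ` H) < 4" if "s \<in> spread N ` schreier" for s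
    using that card_spread_inter_repeating_lt_4[of _ H N y] level_y H(1) rep by blast
  ultimately show ?thesis unfolding n_large_def by (meson not_le)
qed

theorem theorem4p6:
  fixes \<epsilon> :: real
  assumes "0 < \<epsilon>" and "\<epsilon> < 1"
  shows "\<exists>(I :: nat \<Rightarrow> nat set) (F :: nat set set).
           finite_partition I \<and> family_on F UNIV \<and> pre_compact F UNIV \<and>
           (\<forall>M. infinite M \<longrightarrow> \<not> n_large 4 F M) \<and>
           G_lambda I (1 - \<epsilon>) F = schreier \<and> G_plus I F = schreier \<and>
           (\<forall>s\<in>F. s \<inter> I (LEAST m. s \<inter> I m \<noteq> {}) = I (LEAST m. s \<inter> I m \<noteq> {}))"
proof -
  define N where "N = nat \<lceil>1 / \<epsilon>\<rceil>"
  have "1 / \<epsilon> \<le> real N" unfolding N_def by (rule real_nat_ceiling_ge)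
  then have eN: "1 \<le> \<epsilon> * real N" using assms(1) by (simp add: field_simps)
  then have "0 < N" by (cases "N = 0") auto
  let ?I = "pieces N" and ?F = "spread N ` schreier"
  have partition: "finite_partition ?I" using \<open>0 < N\<close> by (rule finite_partition_pieces)
  have family: "family_on ?F UNIV"
    using finite_spread[OF _ \<open>0 < N\<close>] by (auto simp: family_on_def schreier_def)
  have G_lambda: "G_lambda ?I (1 - \<epsilon>) ?F = schreier"
    using sub_lambda_spread[OF _ eN assms(2)] by (simp add: G_lambda_def image_image)
  have G_plus: "G_plus ?I ?F = schreier"
    using sub_plus_spread[OF _ eN assms(2)] by (simp add: G_plus_def image_image)
  have "pre_compact ?F UNIV"
    using partition by (rule pre_compact_if_G_plus_subset_schreier) (simp add: G_plus)
  moreover have "\<forall>s\<in>?F. s \<inter> ?I (LEAST m. s \<inter> ?I m \<noteq> {}) = ?I (LEAST m. s \<inter> ?I m \<noteq> {})"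
    using spread_inter_first_piece[OF _ \<open>0 < N\<close>] by blast
  ultimately show ?thesis
    using partition family G_lambda G_plus spread_not_4_large[OF \<open>0 < N\<close>]
    by (intro exI[of _ ?I] exI[of _ ?F]) simp
qed

end
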